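(* Let $\mathcal{F}$, $B_1,\dots,B_m$ be as in the context. Suppose there exist distinct sets $Y_1,\dots,Y_s\in\binom{[n]}{d+1}\setminus\mathcal{F}$ and sets $Z_i\subseteq Y_i$ with $|Z_i|=d$ ($i\in[s]$) such that: (1) $Z_i\neq B_j$ for all $i\in[s]$, $j\in[m]$; (2) $|Y_i\cap Y_j|\le d-1$ for all distinct $i,j\in[s]$; (3) for all $i<j$ in $[s]$ there is no $k\in[m]$ with both $F_k\cap Y_i=Z_i$ and $F_k\cap Y_j=B_k$. Then $|\mathcal{F}|\le\binom{n}{d}-s$.
   Context: Let $\mathcal{F}=\{F_1,\dots,F_m\}\subseteq\binom{[n]}{d+1}$ consist of distinct sets and have VC-dimension at most $d$ (no $(d+1)$-set $S$ is shattered, i.e. no $S$ such that every $A\subseteq S$ equals $F\cap S$ for some $F\in\mathcal{F}$). For $i\in[m]$, call $B\subsetneq F_i$ admissible for $F_i$ if $F\cap F_i\neq B$ for every $F\in\mathcal{F}$ (admissible sets exist by the VC-dimension assumption). For each $i$, $B_i$ is a fixed admissible set for $F_i$ of maximum cardinality among all admissible sets for $F_i$. *)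

theory Defs
  imports Main
begin

definition shatters :: "'a set set \<Rightarrow> 'a set \<Rightarrow> bool" where
  "shatters \<F> S \<longleftrightarrow> (\<forall>A\<subseteq>S. \<exists>F\<in>\<F>. F \<inter> S = A)"

definition vc_dim_le :: "'a set set \<Rightarrow> nat \<Rightarrow> bool" where
  "vc_dim_le \<F> d \<longleftrightarrow> (\<forall>S. finite S \<and> card S = d + 1 \<longrightarrow> \<not> shatters \<F> S)"

definition admissible :: "'a set set \<Rightarrow> 'a set \<Rightarrow> 'a set \<Rightarrow> bool" where
  "admissible \<F> G B \<longleftrightarrow> B \<subset> G \<and> (\<forall>F\<in>\<F>. F \<inter> G \<noteq> B)"

end

theory Submission
  imports Defs "HOL-Library.Function_Algebras" "HOL-Library.Indicator_Function"
begin

text \<open>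
  Consider real functions on the (d+1)-subsets of [n]. The indicators of
  \<open>{x. U \<subseteq> x}\<close> for the d-sets U span a space of dimension at most
  \<open>n choose d\<close>, and it contains the indicator of \<open>{x. T \<subseteq> x}\<close> for every
  smaller T as well. By inclusion--exclusion,
  \<open>[x \<inter> F = B] = (\<Sum>T | B \<subseteq> T \<and> T \<subseteq> F. (-1)^|T - B| [T \<subseteq> x])\<close>,
  and only the top term \<open>T = F\<close> lies outside that space; it is \<open>\<plusminus>\<delta>_F\<close>.
  Removing it from the trace indicators of the pairs (F_k, B_k) and (Y_i, Z_i)
  gives m + s functions in the space. Evaluated at the points F_j and Y_j they
  are diagonal within each block, by admissibility of B_k and by the small
  pairwise intersections of the Y_i, while conditions (1) and (3) make the
  interaction of the two blocks triangular; hence they are linearly independent.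
\<close>

definition scale_fun :: "real \<Rightarrow> ('a \<Rightarrow> real) \<Rightarrow> 'a \<Rightarrow> real" where
  "scale_fun c f = (\<lambda>x. c * f x)"

interpretation fun_vs: vector_space "scale_fun :: real \<Rightarrow> ('a \<Rightarrow> real) \<Rightarrow> 'a \<Rightarrow> real"
  by unfold_locales (auto simp: scale_fun_def fun_eq_iff algebra_simps)

lemma sum_fun_apply: "(\<Sum>i\<in>I. f i) x = (\<Sum>i\<in>I. f i x)"
  by (induction I rule: infinite_finite_induct) auto

context vector_space
begin

lemma card_le_if_independent_family:
  assumes "finite I" "finite W" "f ` I \<subseteq> span W"
    and indep: "\<And>u. (\<Sum>i\<in>I. u i *s f i) = 0 \<Longrightarrow> \<forall>i\<in>I. u i = 0"
  shows "card I \<le> card W"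
proof -
  have "inj_on f I"
  proof (rule inj_onI, rule ccontr)
    fix i j assume "i \<in> I" "j \<in> I" "f i = f j" "i \<noteq> j"
    define u where "u k = (if k = i then 1 else if k = j then - 1 else (0::'a))" for k
    have "(\<Sum>k\<in>I. u k *s f k) = (\<Sum>k\<in>{i, j}. u k *s f k)"
      using \<open>finite I\<close> \<open>i \<in> I\<close> \<open>j \<in> I\<close> by (intro sum.mono_neutral_right) (auto simp: u_def)
    also have "\<dots> = 0"
      using \<open>f i = f j\<close> \<open>i \<noteq> j\<close> by (simp add: u_def)
    finally have "u i = 0" using indep \<open>i \<in> I\<close> by blast
    then show False by (simp add: u_def)
  qed
  have "independent (f ` I)"
  proof (rule independent_if_scalars_zero)
    fix v and x assume "(\<Sum>y\<in>f ` I. v y *s y) = 0" "x \<in> f ` I"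
    then show "v x = 0"
      using indep[of "v \<circ> f"] by (auto simp: sum.reindex[OF \<open>inj_on f I\<close>])
  qed (use \<open>finite I\<close> in simp)
  then have "card (f ` I) \<le> card W"
    using independent_span_bound \<open>finite W\<close> \<open>f ` I \<subseteq> span W\<close> by blast
  then show ?thesis using card_image[OF \<open>inj_on f I\<close>] by simp
qed

end

lemma block_triangular_system_trivial:
  fixes a :: "'k \<Rightarrow> real" and b :: "'j::linorder \<Rightarrow> real"
  assumes "finite K" "finite S"
    and eq: "\<And>x. (\<Sum>k\<in>K. a k * g k x) + (\<Sum>i\<in>S. b i * h i x) = 0"
    and g_diag: "\<And>k k'. k \<in> K \<Longrightarrow> k' \<in> K \<Longrightarrow> g k (p k') = 0 \<longleftrightarrow> k \<noteq> k'"
    and h_diag: "\<And>i j. i \<in> S \<Longrightarrow> j \<in> S \<Longrightarrow> h i (q j) = 0 \<longleftrightarrow> i \<noteq> j"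
    and cross: "\<And>k i j. k \<in> K \<Longrightarrow> i \<in> S \<Longrightarrow> j \<in> S \<Longrightarrow>
                  h i (p k) \<noteq> 0 \<Longrightarrow> g k (q j) \<noteq> 0 \<Longrightarrow> j < i"
  shows "(\<forall>k\<in>K. a k = 0) \<and> (\<forall>i\<in>S. b i = 0)"
proof -
  have a_zero: "a k = 0" if "k \<in> K" and b_zero: "\<And>i. i \<in> S \<Longrightarrow> h i (p k) \<noteq> 0 \<Longrightarrow> b i = 0" for k
  proof -
    have "(\<Sum>k'\<in>K. a k' * g k' (p k)) = (\<Sum>k'\<in>K. if k' = k then a k * g k (p k) else 0)"
      using g_diag \<open>k \<in> K\<close> by (intro sum.cong) auto
    moreover have "(\<Sum>i\<in>S. b i * h i (p k)) = 0"
      using b_zero by (intro sum.neutral) auto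
    ultimately have "a k * g k (p k) = 0"
      using eq[of "p k"] \<open>finite K\<close> \<open>k \<in> K\<close> by simp
    then show ?thesis using g_diag[OF \<open>k \<in> K\<close> \<open>k \<in> K\<close>] by simp
  qed
  have b_zero: "\<forall>i\<in>S. b i = 0"
  proof (rule ccontr)
    assume "\<not> (\<forall>i\<in>S. b i = 0)"
    then have ne: "{i \<in> S. b i \<noteq> 0} \<noteq> {}" by blast
    define j where "j = Max {i \<in> S. b i \<noteq> 0}"
    have "j \<in> S" "b j \<noteq> 0"
      using Max_in[OF _ ne] \<open>finite S\<close> by (auto simp: j_def)
    have above_j: "b i = 0" if "i \<in> S" "j < i" for i
    proof (rule ccontr)
      assume "b i \<noteq> 0"
      then have "i \<le> j" unfolding j_def using \<open>finite S\<close> \<open>i \<in> S\<close> by (intro Max_ge) auto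
      with \<open>j < i\<close> show False by simp
    qed
    have "(\<Sum>k\<in>K. a k * g k (q j)) = 0"
    proof (rule sum.neutral, intro ballI)
      fix k assume "k \<in> K"
      show "a k * g k (q j) = 0"
      proof (cases "g k (q j) = 0")
        case False
        then have "a k = 0"
          using a_zero \<open>k \<in> K\<close> cross \<open>j \<in> S\<close> above_j by blast
        then show ?thesis by simp
      qed simp
    qed
    moreover have "(\<Sum>i\<in>S. b i * h i (q j)) = (\<Sum>i\<in>S. if i = j then b j * h j (q j) else 0)"
      using h_diag \<open>j \<in> S\<close> by (intro sum.cong) auto
    ultimately have "b j * h j (q j) = 0"
      using eq[of "q j"] \<open>finite S\<close> \<open>j \<in> S\<close> by simp
    then show False using h_diag[OF \<open>j \<in> S\<close> \<open>j \<in> S\<close>] \<open>b j \<noteq> 0\<close> by simp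
  qed
  then show ?thesis using a_zero by blast
qed

lemma block_triangular_card_le:
  fixes g :: "'k \<Rightarrow> 'x \<Rightarrow> real" and h :: "'j::linorder \<Rightarrow> 'x \<Rightarrow> real"
  assumes "finite K" "finite S" "finite W"
    and span: "g ` K \<subseteq> fun_vs.span W" "h ` S \<subseteq> fun_vs.span W"
    and g_diag: "\<And>k k'. k \<in> K \<Longrightarrow> k' \<in> K \<Longrightarrow> g k (p k') = 0 \<longleftrightarrow> k \<noteq> k'"
    and h_diag: "\<And>i j. i \<in> S \<Longrightarrow> j \<in> S \<Longrightarrow> h i (q j) = 0 \<longleftrightarrow> i \<noteq> j"
    and cross: "\<And>k i j. k \<in> K \<Longrightarrow> i \<in> S \<Longrightarrow> j \<in> S \<Longrightarrow>
                  h i (p k) \<noteq> 0 \<Longrightarrow> g k (q j) \<noteq> 0 \<Longrightarrow> j < i"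
  shows "card K + card S \<le> card W"
proof -
  have "card (K <+> S) \<le> card W"
  proof (rule fun_vs.card_le_if_independent_family)
    show "case_sum g h ` (K <+> S) \<subseteq> fun_vs.span W" using span by auto
    fix u assume u: "(\<Sum>i\<in>K <+> S. scale_fun (u i) (case_sum g h i)) = 0"
    have pointwise: "(\<Sum>k\<in>K. u (Inl k) * g k x) + (\<Sum>i\<in>S. u (Inr i) * h i x) = 0" for x
    proof -
      have "(\<Sum>i\<in>K <+> S. scale_fun (u i) (case_sum g h i)) x = 0" using u by simp
      then show ?thesis
        using \<open>finite K\<close> \<open>finite S\<close>
        by (simp add: sum.Plus sum_fun_apply scale_fun_def)
    qed
    have "(\<forall>k\<in>K. u (Inl k) = 0) \<and> (\<forall>i\<in>S. u (Inr i) = 0)"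
      using \<open>finite K\<close> \<open>finite S\<close> pointwise g_diag h_diag cross
      by (rule block_triangular_system_trivial[where p = p and q = q])
    then show "\<forall>i\<in>K <+> S. u i = 0" by auto
  qed (use \<open>finite K\<close> \<open>finite S\<close> \<open>finite W\<close> in auto)
  then show ?thesis using \<open>finite K\<close> \<open>finite S\<close> by (simp add: card_Plus)
qed

definition layer :: "'a set \<Rightarrow> nat \<Rightarrow> 'a set set" where
  "layer X k = {A. A \<subseteq> X \<and> card A = k}"

definition superset_ind :: "'a set set \<Rightarrow> 'a set \<Rightarrow> 'a set \<Rightarrow> real" where
  "superset_ind L T = indicator {x \<in> L. T \<subseteq> x}"

definition trace_ind :: "'a set set \<Rightarrow> 'a set \<Rightarrow> 'a set \<Rightarrow> 'a set \<Rightarrow> real" where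
  "trace_ind L F B = indicator {x \<in> L. x \<inter> F = B}"

definition reduced_trace_ind :: "'a set set \<Rightarrow> 'a set \<Rightarrow> 'a set \<Rightarrow> 'a set \<Rightarrow> real" where
  "reduced_trace_ind L F B = trace_ind L F B - scale_fun ((-1) ^ card (F - B)) (indicator {F})"

lemma finite_layer: "finite X \<Longrightarrow> finite (layer X k)"
  unfolding layer_def by (rule finite_subset[of _ "Pow X"]) auto

lemma card_layer: "finite X \<Longrightarrow> card (layer X k) = card X choose k"
  unfolding layer_def by (rule n_subsets)

lemma card_sets_between:
  assumes "finite x" "T \<subseteq> x" "card T \<le> d"
  shows "card {U. T \<subseteq> U \<and> U \<subseteq> x \<and> card U = d} = (card x - card T) choose (d - card T)"
proof -
  have "finite T" using assms finite_subset by blast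
  have "bij_betw (\<lambda>V. T \<union> V) (layer (x - T) (d - card T)) {U. T \<subseteq> U \<and> U \<subseteq> x \<and> card U = d}"
  proof (rule bij_betw_byWitness[where f' = "\<lambda>U. U - T"])
    show "(\<lambda>V. T \<union> V) ` layer (x - T) (d - card T) \<subseteq> {U. T \<subseteq> U \<and> U \<subseteq> x \<and> card U = d}"
    proof (rule image_subsetI)
      fix V assume V: "V \<in> layer (x - T) (d - card T)"
      then have "finite V" using \<open>finite x\<close> finite_subset by (auto simp: layer_def)
      with V \<open>finite T\<close> have "card (T \<union> V) = card T + card V"
        by (subst card_Un_disjoint) (auto simp: layer_def)
      with V assms show "T \<union> V \<in> {U. T \<subseteq> U \<and> U \<subseteq> x \<and> card U = d}"
        by (auto simp: layer_def)
    qed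
    show "(\<lambda>U. U - T) ` {U. T \<subseteq> U \<and> U \<subseteq> x \<and> card U = d} \<subseteq> layer (x - T) (d - card T)"
      using \<open>finite T\<close> by (auto simp: layer_def card_Diff_subset)
  qed (auto simp: layer_def)
  then have "card {U. T \<subseteq> U \<and> U \<subseteq> x \<and> card U = d} = card (layer (x - T) (d - card T))"
    by (simp add: bij_betw_same_card)
  also have "\<dots> = (card x - card T) choose (d - card T)"
    using assms \<open>finite T\<close> by (simp add: card_layer card_Diff_subset)
  finally show ?thesis .
qed

lemma superset_ind_in_span:
  assumes "finite X" "T \<subseteq> X" "card T \<le> d"
  shows "superset_ind (layer X (Suc d)) T
           \<in> fun_vs.span (superset_ind (layer X (Suc d)) ` layer X d)"
proof -
  define L where "L = layer X (Suc d)"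
  define J where "J = {U \<in> layer X d. T \<subseteq> U}"
  define c where "c = real ((Suc d - card T) choose (d - card T))"
  have "finite J" using finite_layer[OF \<open>finite X\<close>] by (simp add: J_def)
  have "(\<Sum>U\<in>J. superset_ind L U) = scale_fun c (superset_ind L T)"
  proof
    fix x
    have "(\<Sum>U\<in>J. superset_ind L U) x = real (card {U \<in> J. x \<in> L \<and> U \<subseteq> x})"
      using \<open>finite J\<close> by (simp add: sum_fun_apply superset_ind_def indicator_def sum.If_cases Int_def)
    also have "\<dots> = scale_fun c (superset_ind L T) x"
    proof (cases "x \<in> L \<and> T \<subseteq> x")
      case True
      then have "finite x" "card x = Suc d"
        using \<open>finite X\<close> finite_subset by (auto simp: L_def layer_def)
      moreover have "{U \<in> J. x \<in> L \<and> U \<subseteq> x} = {U. T \<subseteq> U \<and> U \<subseteq> x \<and> card U = d}"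
        using True by (auto simp: J_def L_def layer_def)
      ultimately show ?thesis
        using True assms card_sets_between[of x T d]
        by (simp add: c_def scale_fun_def superset_ind_def)
    next
      case False
      then have "{U \<in> J. x \<in> L \<and> U \<subseteq> x} = {}" by (auto simp: J_def)
      then have "card {U \<in> J. x \<in> L \<and> U \<subseteq> x} = 0" by (simp only: card.empty)
      then show ?thesis using False by (simp add: scale_fun_def superset_ind_def)
    qed
    finally show "(\<Sum>U\<in>J. superset_ind L U) x = scale_fun c (superset_ind L T) x" .
  qed
  moreover have "(\<Sum>U\<in>J. superset_ind L U) \<in> fun_vs.span (superset_ind L ` layer X d)"
    by (intro fun_vs.span_sum fun_vs.span_base) (auto simp: J_def)
  moreover have "c \<noteq> 0" by (simp add: c_def)
  ultimately show ?thesis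
    unfolding L_def
    by (metis fun_vs.span_scale fun_vs.scale_scale fun_vs.scale_one field_class.field_inverse)
qed

lemma trace_ind_self: "trace_ind L F F = superset_ind L F"
  by (auto simp: trace_ind_def superset_ind_def Int_absorb2 Int_absorb1 intro!: arg_cong[of _ _ indicator])

lemma trace_ind_remove:
  assumes "a \<in> F" "a \<notin> B" "B \<subseteq> F"
  shows "trace_ind L (F - {a}) B = trace_ind L F B + trace_ind L F (insert a B)"
proof
  fix x
  show "trace_ind L (F - {a}) B x = (trace_ind L F B + trace_ind L F (insert a B)) x"
    using assms by (cases "a \<in> x") (auto simp: trace_ind_def indicator_def)
qed

lemma trace_ind_in_span:
  assumes "finite X" "B \<subseteq> F" "F \<subseteq> X" "card F \<le> d"
  shows "trace_ind (layer X (Suc d)) F B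
           \<in> fun_vs.span (superset_ind (layer X (Suc d)) ` layer X d)"
  using assms(2-4)
proof (induction "card (F - B)" arbitrary: B F rule: less_induct)
  case less
  have "finite F" using \<open>finite X\<close> \<open>F \<subseteq> X\<close> finite_subset by blast
  show ?case
  proof (cases "B = F")
    case True
    then show ?thesis
      using superset_ind_in_span[OF \<open>finite X\<close>] less.prems by (simp add: trace_ind_self)
  next
    case False
    then obtain a where a: "a \<in> F" "a \<notin> B" using \<open>B \<subseteq> F\<close> by blast
    have "trace_ind (layer X (Suc d)) (F - {a}) B
            \<in> fun_vs.span (superset_ind (layer X (Suc d)) ` layer X d)"
      using less.prems a \<open>finite F\<close> card_Diff1_le[of F a]
      by (intro less.hyps psubset_card_mono) auto
    moreover have "trace_ind (layer X (Suc d)) F (insert a B)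
            \<in> fun_vs.span (superset_ind (layer X (Suc d)) ` layer X d)"
      using less.prems a \<open>finite F\<close> by (intro less.hyps psubset_card_mono) auto
    ultimately show ?thesis
      using trace_ind_remove[OF a \<open>B \<subseteq> F\<close>, of "layer X (Suc d)"]
      by (metis fun_vs.span_diff add_diff_cancel_right')
  qed
qed

lemma reduced_trace_ind_in_span:
  assumes "finite X" "B \<subseteq> F" "F \<in> layer X (Suc d)"
  shows "reduced_trace_ind (layer X (Suc d)) F B
           \<in> fun_vs.span (superset_ind (layer X (Suc d)) ` layer X d)"
  using assms(2)
proof (induction "card (F - B)" arbitrary: B rule: less_induct)
  case less
  define L where "L = layer X (Suc d)"
  have "finite F" using \<open>finite X\<close> assms(3) finite_subset by (auto simp: layer_def)
  show ?case
  proof (cases "B = F")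
    case True
    have "{x \<in> L. F \<subseteq> x} = {F}"
      using assms(3) \<open>finite X\<close>
      by (auto simp: L_def layer_def) (metis card_subset_eq finite_subset)
    then have "superset_ind L F = indicator {F}"
      by (simp add: superset_ind_def)
    then show ?thesis
      using True by (simp add: reduced_trace_ind_def trace_ind_self scale_fun_def L_def fun_vs.span_zero)
  next
    case False
    then obtain a where a: "a \<in> F" "a \<notin> B" using \<open>B \<subseteq> F\<close> by blast
    have card_less: "card (F - insert a B) < card (F - B)"
      using a \<open>finite F\<close> by (intro psubset_card_mono) auto
    have "card (F - B) = Suc (card (F - insert a B))"
      using a \<open>finite F\<close> by (metis Diff_insert card_Suc_Diff1 finite_Diff DiffI)
    then have "reduced_trace_ind L F B
                 = trace_ind L (F - {a}) B - reduced_trace_ind L F (insert a B)"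
      using trace_ind_remove[OF a \<open>B \<subseteq> F\<close>, of L]
      by (simp add: reduced_trace_ind_def scale_fun_def fun_eq_iff)
    moreover have "trace_ind L (F - {a}) B \<in> fun_vs.span (superset_ind L ` layer X d)"
      using less.prems a assms(3) \<open>finite F\<close> unfolding L_def
      by (intro trace_ind_in_span[OF \<open>finite X\<close>]) (auto simp: layer_def)
    moreover have "reduced_trace_ind L F (insert a B) \<in> fun_vs.span (superset_ind L ` layer X d)"
      using less.hyps[OF card_less] less.prems a by (simp add: L_def)
    ultimately show ?thesis
      unfolding L_def by (metis fun_vs.span_diff)
  qed
qed

lemma reduced_trace_ind_eq_0_iff:
  assumes "x \<in> L" "B \<subset> F"
  shows "reduced_trace_ind L F B x = 0 \<longleftrightarrow> x \<noteq> F \<and> x \<inter> F \<noteq> B"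
  using assms by (auto simp: reduced_trace_ind_def trace_ind_def scale_fun_def indicator_def)

lemma reduced_trace_ind_diag_if_admissible:
  assumes "inj_on F K" "k \<in> K" "k' \<in> K" "F k' \<in> L"
    and "admissible (F ` K) (F k) (B k)"
  shows "reduced_trace_ind L (F k) (B k) (F k') = 0 \<longleftrightarrow> k \<noteq> k'"
proof -
  have "B k \<subset> F k" using assms(5) by (simp add: admissible_def)
  moreover have "F k' \<inter> F k \<noteq> B k" using assms(3,5) by (auto simp: admissible_def)
  moreover have "F k' = F k \<longleftrightarrow> k = k'" using assms(1-3) by (auto dest: inj_onD)
  ultimately show ?thesis using reduced_trace_ind_eq_0_iff[OF assms(4)] by blast
qed

lemma reduced_trace_ind_diag_if_small_intersections:
  assumes "inj_on Y S" "i \<in> S" "j \<in> S" "Y j \<in> L" "Z i \<subset> Y i"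
    and "i \<noteq> j \<Longrightarrow> card (Y j \<inter> Y i) < card (Z i)"
  shows "reduced_trace_ind L (Y i) (Z i) (Y j) = 0 \<longleftrightarrow> i \<noteq> j"
proof -
  have "Y j = Y i \<longleftrightarrow> i = j" using assms(1-3) by (auto dest: inj_onD)
  moreover have "i \<noteq> j \<Longrightarrow> Y j \<inter> Y i \<noteq> Z i" using assms(6) by auto
  ultimately show ?thesis using reduced_trace_ind_eq_0_iff[OF assms(4,5)] by blast
qed

theorem claim4p3:
  fixes n d m s :: nat
    and F :: "nat \<Rightarrow> nat set"
    and B :: "nat \<Rightarrow> nat set"
    and Y :: "nat \<Rightarrow> nat set"
    and Z :: "nat \<Rightarrow> nat set"
  assumes F_inj: "inj_on F {1..m}"
    and F_sub: "\<And>i. i \<in> {1..m} \<Longrightarrow> F i \<subseteq> {1..n} \<and> card (F i) = d + 1"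
    and vc: "vc_dim_le (F ` {1..m}) d"
    and B_adm: "\<And>i. i \<in> {1..m} \<Longrightarrow> admissible (F ` {1..m}) (F i) (B i)"
    and B_max: "\<And>i B'. i \<in> {1..m} \<Longrightarrow> admissible (F ` {1..m}) (F i) B'
                  \<Longrightarrow> card B' \<le> card (B i)"
    and Y_inj: "inj_on Y {1..s}"
    and Y_sub: "\<And>i. i \<in> {1..s} \<Longrightarrow> Y i \<subseteq> {1..n} \<and> card (Y i) = d + 1"
    and Y_notin: "\<And>i. i \<in> {1..s} \<Longrightarrow> Y i \<notin> F ` {1..m}"
    and Z_sub: "\<And>i. i \<in> {1..s} \<Longrightarrow> Z i \<subseteq> Y i \<and> card (Z i) = d"
    and cond1: "\<And>i j. i \<in> {1..s} \<Longrightarrow> j \<in> {1..m} \<Longrightarrow> Z i \<noteq> B j"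
    and cond2: "\<And>i j. i \<in> {1..s} \<Longrightarrow> j \<in> {1..s} \<Longrightarrow> i \<noteq> j \<Longrightarrow>
                  int (card (Y i \<inter> Y j)) \<le> int d - 1"
    and cond3: "\<And>i j. i \<in> {1..s} \<Longrightarrow> j \<in> {1..s} \<Longrightarrow> i < j \<Longrightarrow>
                  \<not> (\<exists>k\<in>{1..m}. F k \<inter> Y i = Z i \<and> F k \<inter> Y j = B k)"
  shows "int (card (F ` {1..m})) \<le> int (n choose d) - int s"
proof -
  define L where "L = layer {1..n} (Suc d)"
  define W where "W = superset_ind L ` layer {1..n} d"
  have F_L: "F k \<in> L" if "k \<in> {1..m}" for k using F_sub[OF that] by (simp add: L_def layer_def)
  have Y_L: "Y i \<in> L" if "i \<in> {1..s}" for i using Y_sub[OF that] by (simp add: L_def layer_def)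
  have B_psub: "B k \<subset> F k" if "k \<in> {1..m}" for k using B_adm[OF that] by (simp add: admissible_def)
  have Z_psub: "Z i \<subset> Y i" if "i \<in> {1..s}" for i using Y_sub[OF that] Z_sub[OF that] by auto
  have "card {1..m} + card {1..s} \<le> card W"
  proof (rule block_triangular_card_le[where g = "\<lambda>k. reduced_trace_ind L (F k) (B k)" and p = F
        and h = "\<lambda>i. reduced_trace_ind L (Y i) (Z i)" and q = Y])
    show "(\<lambda>k. reduced_trace_ind L (F k) (B k)) ` {1..m} \<subseteq> fun_vs.span W"
    proof (rule image_subsetI)
      fix k assume "k \<in> {1..m}"
      then show "reduced_trace_ind L (F k) (B k) \<in> fun_vs.span W"
        using F_L B_psub unfolding L_def W_def by (intro reduced_trace_ind_in_span) auto
    qed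
    show "(\<lambda>i. reduced_trace_ind L (Y i) (Z i)) ` {1..s} \<subseteq> fun_vs.span W"
    proof (rule image_subsetI)
      fix i assume "i \<in> {1..s}"
      then show "reduced_trace_ind L (Y i) (Z i) \<in> fun_vs.span W"
        using Y_L Z_psub unfolding L_def W_def by (intro reduced_trace_ind_in_span) auto
    qed
    show "reduced_trace_ind L (F k) (B k) (F k') = 0 \<longleftrightarrow> k \<noteq> k'"
      if "k \<in> {1..m}" "k' \<in> {1..m}" for k k'
      using reduced_trace_ind_diag_if_admissible[where B = B,
          OF F_inj that F_L[OF that(2)] B_adm[OF that(1)]] .
    show "reduced_trace_ind L (Y i) (Z i) (Y j) = 0 \<longleftrightarrow> i \<noteq> j"
      if "i \<in> {1..s}" "j \<in> {1..s}" for i j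
    proof (rule reduced_trace_ind_diag_if_small_intersections[where Z = Z, OF Y_inj that Y_L Z_psub])
      show "card (Y j \<inter> Y i) < card (Z i)" if "i \<noteq> j"
        using cond2[of j i] Z_sub[of i] \<open>i \<in> {1..s}\<close> \<open>j \<in> {1..s}\<close> that by fastforce
    qed (use that in simp_all)
    show "j < i"
      if "k \<in> {1..m}" "i \<in> {1..s}" "j \<in> {1..s}"
        and "reduced_trace_ind L (Y i) (Z i) (F k) \<noteq> 0"
        and "reduced_trace_ind L (F k) (B k) (Y j) \<noteq> 0" for k i j
    proof -
      have "F k \<noteq> Y i" "Y j \<noteq> F k" using Y_notin that(1-3) by blast+
      then have "F k \<inter> Y i = Z i" "Y j \<inter> F k = B k"
        using that(4,5) reduced_trace_ind_eq_0_iff[OF F_L[OF that(1)] Z_psub[OF that(2)]]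
          reduced_trace_ind_eq_0_iff[OF Y_L[OF that(3)] B_psub[OF that(1)]] by blast+
      moreover have "i \<noteq> j" using cond1[OF that(2,1)] calculation by (auto simp: Int_commute)
      moreover have "\<not> i < j" using cond3[OF that(2,3)] that(1) calculation by (auto simp: Int_commute)
      ultimately show "j < i" by simp
    qed
  qed (simp_all add: W_def finite_layer)
  moreover have "card W \<le> n choose d"
    using card_image_le[OF finite_layer[of "{1..n}" d]] card_layer[of "{1..n}" d]
    by (simp add: W_def)
  moreover have "card (F ` {1..m}) = m" using card_image[OF F_inj] by simp
  ultimately show ?thesis by simp
qed

end
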